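(* Let $F$ be a once-punctured torus equipped with a point of the decorated super Teichmüller space $S\tilde T(F)$. For an ideal triangulation of $F$ with arcs having super $\lambda$-lengths $a,b,c$, define the super semi-perimeter \[ h=\frac{a}{bc}+\frac{b}{ac}+\frac{c}{ab}+\frac{W_a}{a}+\frac{W_b}{b}+\frac{W_c}{c}. \] Then $h$ is invariant under flips, i.e. it takes the same value for every ideal triangulation of $F$.
   Context: $S\tilde T(F)$ is the decorated $\mathrm{OSp}(1|2)$ super Teichmüller space (Penner–Zeitlin), with values in a real Grassmann algebra. A point assigns, for each ideal triangulation of $F$ (three disjoint non-isotopic ideal arcs cutting $F$ into two ideal triangles), an even $\lambda$-length with positive body to each arc (depending only on the arc), an odd $\mu$-invariant to each triangle, and a spin structure orienting each arc. For an arc $e$, $W_e=\theta_1\theta_2$ where $\theta_1,\theta_2$ are the $\mu$-invariants of the triangles adjacent to $e$ lying counter-clockwise and clockwise of $e$ relative to its spin orientation; $W_e$ does not depend on the triangulation containing $e$. Flipping $c$ in a triangulation $\{a,b,c\}$ (with triangle $\mu$-invariants $\theta,\sigma$) yields the arc $d$ with $cd=a^2+b^2+abW_c$, new $\mu$-invariants $\theta'=(b\theta+a\sigma)/\sqrt{a^2+b^2}$, $\sigma'=(b\sigma-a\theta)/\sqrt{a^2+b^2}$, and the spin orientation on $b$ reversed. *)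

theory Defs
  imports Complex_Main
begin

text \<open>A real Grassmann algebra is modelled axiomatically: a real associative unital
algebra 'g with a Z/2-grading into an even part Ev and an odd part Od, which is
supercommutative, together with the body map to the reals (a unital algebra
homomorphism vanishing on odd elements) whose kernel consists of nilpotent
elements (the soul is nilpotent).\<close>

definition grassmann_alg :: "'g::real_algebra_1 set \<Rightarrow> 'g set \<Rightarrow> ('g \<Rightarrow> real) \<Rightarrow> bool" where
  "grassmann_alg Ev Od body \<longleftrightarrow>
     0 \<in> Ev \<and> 0 \<in> Od \<and> 1 \<in> Ev \<and>
     (\<forall>x\<in>Ev. \<forall>y\<in>Ev. x + y \<in> Ev) \<and> (\<forall>x\<in>Od. \<forall>y\<in>Od. x + y \<in> Od) \<and>
     (\<forall>r. \<forall>x\<in>Ev. scaleR r x \<in> Ev) \<and> (\<forall>r. \<forall>x\<in>Od. scaleR r x \<in> Od) \<and>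
     Ev \<inter> Od = {0} \<and> (\<forall>x. \<exists>e\<in>Ev. \<exists>d\<in>Od. x = e + d) \<and>
     (\<forall>x\<in>Ev. \<forall>y\<in>Ev. x * y \<in> Ev) \<and> (\<forall>x\<in>Ev. \<forall>y\<in>Od. x * y \<in> Od) \<and>
     (\<forall>x\<in>Od. \<forall>y\<in>Ev. x * y \<in> Od) \<and> (\<forall>x\<in>Od. \<forall>y\<in>Od. x * y \<in> Ev) \<and>
     (\<forall>x\<in>Ev. \<forall>y. x * y = y * x) \<and> (\<forall>x\<in>Od. \<forall>y\<in>Od. x * y = - (y * x)) \<and>
     (\<forall>x y. body (x + y) = body x + body y) \<and> (\<forall>r x. body (scaleR r x) = r * body x) \<and>
     (\<forall>x y. body (x * y) = body x * body y) \<and> body 1 = 1 \<and>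
     (\<forall>x\<in>Od. body x = 0) \<and>
     (\<forall>x. \<exists>n. (x - of_real (body x)) ^ n = 0)"

definition ginv :: "'g::ring_1 \<Rightarrow> 'g" where
  "ginv x = (THE y. x * y = 1 \<and> y * x = 1)"

text \<open>Isotopy classes of ideal arcs of the once-punctured torus F correspond to
primitive integer vectors (p,q) modulo sign (slopes in Q \<union> {\<infinity>}); ideal
triangulations correspond to triples of arcs with pairwise determinant \<plusminus>1
(Farey triangles). Flipping the arc w in (u,v,w) produces the unique other arc w'
(up to sign) such that (u,v,w') is a triangulation.\<close>

type_synonym slope = "int \<times> int"

definition neg :: "slope \<Rightarrow> slope" where
  "neg e = (- fst e, - snd e)"

definition det2 :: "slope \<Rightarrow> slope \<Rightarrow> int" where
  "det2 u v = fst u * snd v - snd u * fst v"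

definition is_triang :: "slope \<Rightarrow> slope \<Rightarrow> slope \<Rightarrow> bool" where
  "is_triang u v w \<longleftrightarrow> \<bar>det2 u v\<bar> = 1 \<and> \<bar>det2 v w\<bar> = 1 \<and> \<bar>det2 u w\<bar> = 1"

text \<open>lam e is the super lambda-length of the arc e, W e the even invariant
W_e = \<theta>1 \<theta>2 of the arc e (independent of the triangulation containing e).\<close>

definition super_teich_point ::
  "'g::real_algebra_1 set \<Rightarrow> 'g set \<Rightarrow> ('g \<Rightarrow> real) \<Rightarrow> (slope \<Rightarrow> 'g) \<Rightarrow> (slope \<Rightarrow> 'g) \<Rightarrow> bool" where
  "super_teich_point Ev Od body lam W \<longleftrightarrow>
     (\<forall>e. coprime (fst e) (snd e) \<longrightarrow>
          lam e \<in> Ev \<and> body (lam e) > 0 \<and> lam (neg e) = lam e \<and> W (neg e) = W e) \<and>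
     (\<forall>u v w. is_triang u v w \<longrightarrow>
          (\<exists>\<theta>\<in>Od. \<exists>\<sigma>\<in>Od. \<forall>e\<in>{u, v, w}. W e = \<theta> * \<sigma> \<or> W e = \<sigma> * \<theta>)) \<and>
     (\<forall>u v w w'. is_triang u v w \<and> is_triang u v w' \<and> w' \<noteq> w \<and> w' \<noteq> neg w \<longrightarrow>
          lam w * lam w' = lam u ^ 2 + lam v ^ 2 + lam u * lam v * W w)"

definition semi_perimeter :: "(slope \<Rightarrow> 'g::ring_1) \<Rightarrow> (slope \<Rightarrow> 'g) \<Rightarrow> slope \<Rightarrow> slope \<Rightarrow> slope \<Rightarrow> 'g" where
  "semi_perimeter lam W u v w =
     (let a = lam u; b = lam v; c = lam w in
        a * ginv (b * c) + b * ginv (a * c) + c * ginv (a * b)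
        + W u * ginv a + W v * ginv b + W w * ginv c)"

end

theory Submission
  imports Defs "HOL-Library.Product_Plus"
begin

(* The terms of h involving the arc c are
     a/(bc) + b/(ac) + c/(ab) + W_c/c = ((a^2 + b^2 + ab W_c)/c + c)/(ab),
   so the relation cd = a^2 + b^2 + ab W_c of the flip c -> d turns them into (c + d)/(ab), and the
   relation dc = a^2 + b^2 + ab W_d of the inverse flip does the same for the terms involving d.
   All these quantities are even, hence central, and lambda-lengths are invertible because their
   soul is nilpotent; so this is a computation in the commutative ring of central elements.
   Invariance under all changes of triangulation follows from connectivity of the flip graph:
   in the Farey model, if u, v are arcs of a triangulation with |u|^2 <= |v|^2 and |v|^2 > 1,
   then one of v + u, v - u is shorter than v, so a flip decreases |u|^2 + |v|^2 until the
   triangulation is the standard one up to signs. *)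

definition central :: "'a::ring_1 \<Rightarrow> bool" where
  "central z \<longleftrightarrow> (\<forall>y. z * y = y * z)"

lemma central_mult: "central x \<Longrightarrow> central y \<Longrightarrow> central (x * y)"
  unfolding central_def by (metis mult.assoc)

lemma central_right_inverse:
  assumes "central x" and "x * y = 1"
  shows "central y"
  unfolding central_def
proof
  fix z
  have "y * x = 1" using assms unfolding central_def by metis
  have "y * z = y * z * (x * y)" using assms(2) by simp
  also have "\<dots> = y * (x * z) * y" using assms(1) unfolding central_def by (metis mult.assoc)
  also have "\<dots> = z * y" using \<open>y * x = 1\<close> by (metis mult.assoc mult_1_left)
  finally show "y * z = z * y" .
qed

typedef (overloaded) ('a::ring_1) centre = "{z::'a. central z}"
  morphisms centre_elt Centre
  by (auto simp: central_def intro: exI[of _ 0])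

setup_lifting type_definition_centre

instantiation centre :: (ring_1) comm_ring_1
begin

lift_definition zero_centre :: "'a centre" is 0
  by (simp add: central_def)

lift_definition one_centre :: "'a centre" is 1
  by (simp add: central_def)

lift_definition plus_centre :: "'a centre \<Rightarrow> 'a centre \<Rightarrow> 'a centre" is "(+)"
  by (simp add: central_def algebra_simps)

lift_definition uminus_centre :: "'a centre \<Rightarrow> 'a centre" is uminus
  by (simp add: central_def)

lift_definition minus_centre :: "'a centre \<Rightarrow> 'a centre \<Rightarrow> 'a centre" is "(-)"
  by (simp add: central_def algebra_simps)

lift_definition times_centre :: "'a centre \<Rightarrow> 'a centre \<Rightarrow> 'a centre" is "(*)"
  by (rule central_mult)

instance
proof
  fix a b :: "'a centre"
  show "a * b = b * a"
    by transfer (metis central_def)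
qed (transfer; simp add: algebra_simps)+

end

lemma flip_terms_factor:
  fixes a b x ia ib ix w :: "'a::comm_ring_1"
  assumes "a * ia = 1" and "b * ib = 1"
  shows "a * (ix * ib) + b * (ix * ia) + x * (ib * ia) + w * ix
       = ia * ib * ((a\<^sup>2 + b\<^sup>2 + a * b * w) * ix + x)"
proof -
  have "ia * ib * ((a\<^sup>2 + b\<^sup>2 + a * b * w) * ix + x)
      = (a * ia) * (a * (ix * ib)) + (b * ib) * (b * (ix * ia)) + (a * ia) * (b * ib) * (w * ix)
        + x * (ib * ia)"
    by (simp add: algebra_simps power2_eq_square)
  then show ?thesis
    using assms by simp
qed

lemma semi_perimeter_flip_identity:
  fixes a b c d ia ib ic id wa wb wc wd :: "'a::comm_ring_1"
  assumes "a * ia = 1" "b * ib = 1" "c * ic = 1" "d * id = 1"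
    and "c * d = a\<^sup>2 + b\<^sup>2 + a * b * wc" and "d * c = a\<^sup>2 + b\<^sup>2 + a * b * wd"
  shows "a * (ic * ib) + b * (ic * ia) + c * (ib * ia) + wa * ia + wb * ib + wc * ic
       = a * (id * ib) + b * (id * ia) + d * (ib * ia) + wa * ia + wb * ib + wd * id"
proof -
  have "a * (ic * ib) + b * (ic * ia) + c * (ib * ia) + wc * ic
      = ia * ib * ((a\<^sup>2 + b\<^sup>2 + a * b * wc) * ic + c)"
    by (rule flip_terms_factor[OF assms(1,2)])
  also have "\<dots> = ia * ib * (d * (c * ic) + c)"
    by (simp only: assms(5)[symmetric]) (simp add: algebra_simps)
  also have "\<dots> = ia * ib * (d + c)"
    using assms(3) by simp
  also have "\<dots> = ia * ib * (c * (d * id) + d)"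
    using assms(4) by (simp add: algebra_simps)
  also have "\<dots> = ia * ib * ((a\<^sup>2 + b\<^sup>2 + a * b * wd) * id + d)"
    by (simp only: assms(6)[symmetric]) (simp add: algebra_simps)
  also have "\<dots> = a * (id * ib) + b * (id * ia) + d * (ib * ia) + wd * id"
    by (rule flip_terms_factor[OF assms(1,2), symmetric])
  finally show ?thesis
    by (simp add: algebra_simps)
qed

lemmas central_semi_perimeter_flip_identity =
  semi_perimeter_flip_identity[where 'a = "'a::ring_1 centre", untransferred]

lemma ginv_eqI:
  fixes x y :: "'a::ring_1"
  assumes "x * y = 1" and "y * x = 1"
  shows "ginv x = y"
  unfolding ginv_def
proof (rule the_equality)
  fix z assume z: "x * z = 1 \<and> z * x = 1"
  have "z = (z * x) * y"
    using assms(1) by (simp add: mult.assoc)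
  then show "z = y"
    using z by simp
qed (use assms in simp)

lemma ginv_mult:
  fixes x y :: "'a::ring_1"
  assumes "x * ginv x = 1" "ginv x * x = 1" "y * ginv y = 1" "ginv y * y = 1"
  shows "ginv (x * y) = ginv y * ginv x"
proof (rule ginv_eqI)
  have "x * y * (ginv y * ginv x) = x * (y * ginv y) * ginv x"
    by (simp add: mult.assoc)
  then show "x * y * (ginv y * ginv x) = 1"
    using assms by simp
  have "ginv y * ginv x * (x * y) = ginv y * (ginv x * x) * y"
    by (simp add: mult.assoc)
  then show "ginv y * ginv x * (x * y) = 1"
    using assms by simp
qed

lemma nilpotent_geometric_sum:
  fixes q :: "'a::ring_1"
  assumes "q ^ n = 0"
  shows "(1 - q) * (\<Sum>k<n. q ^ k) = 1" and "(\<Sum>k<n. q ^ k) * (1 - q) = 1"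
proof -
  have "(1 - q) * (\<Sum>k<n. q ^ k) = (\<Sum>k<n. q ^ k - q ^ Suc k)"
    by (simp add: sum_distrib_left left_diff_distrib)
  also have "\<dots> = 1"
    using assms sum_lessThan_telescope'[of "\<lambda>k. q ^ k" n] by simp
  finally show "(1 - q) * (\<Sum>k<n. q ^ k) = 1" .
  have "(\<Sum>k<n. q ^ k) * (1 - q) = (\<Sum>k<n. q ^ k - q ^ Suc k)"
    by (simp add: sum_distrib_right right_diff_distrib sum_subtractf power_commutes)
  also have "\<dots> = 1"
    using assms sum_lessThan_telescope'[of "\<lambda>k. q ^ k" n] by simp
  finally show "(\<Sum>k<n. q ^ k) * (1 - q) = 1" .
qed

lemma scaleR_power: "(r *\<^sub>R x) ^ n = r ^ n *\<^sub>R (x::'a::real_algebra_1) ^ n"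
  by (induction n) (simp_all add: mult_scaleR_left mult_scaleR_right)

lemma invertible_if_nilpotent_shift:
  fixes x :: "'a::real_algebra_1"
  assumes "(x - of_real r) ^ n = 0" and "r \<noteq> 0"
  shows "\<exists>y. x * y = 1 \<and> y * x = 1"
proof -
  define q where "q = (- 1 / r) *\<^sub>R (x - of_real r)"
  define s where "s = (\<Sum>k<n. q ^ k)"
  have "q ^ n = 0"
    using assms(1) unfolding q_def scaleR_power by simp
  then have s: "(1 - q) * s = 1" "s * (1 - q) = 1"
    unfolding s_def by (rule nilpotent_geometric_sum)+
  have x: "x = r *\<^sub>R (1 - q)"
    using assms(2) by (simp add: q_def scaleR_diff_right of_real_def)
  have "x * ((1 / r) *\<^sub>R s) = 1" and "((1 / r) *\<^sub>R s) * x = 1"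
    using assms(2) s by (simp_all add: x)
  then show ?thesis
    by blast
qed

lemma grassmann_alg_even_central:
  assumes "grassmann_alg Ev Od body" and "x \<in> Ev"
  shows "central x"
  using assms unfolding grassmann_alg_def central_def by blast

lemma grassmann_alg_odd_mult_odd:
  assumes "grassmann_alg Ev Od body" and "x \<in> Od" and "y \<in> Od"
  shows "x * y \<in> Ev"
  using assms unfolding grassmann_alg_def by blast

lemma grassmann_alg_ginv:
  assumes "grassmann_alg Ev Od body" and "body x \<noteq> 0"
  shows "x * ginv x = 1" and "ginv x * x = 1"
proof -
  have "\<forall>x. \<exists>n. (x - of_real (body x)) ^ n = 0"
    using assms(1) unfolding grassmann_alg_def by blast
  then obtain n where "(x - of_real (body x)) ^ n = 0"
    by blast
  then obtain y where "x * y = 1" and "y * x = 1"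
    using invertible_if_nilpotent_shift assms(2) by blast
  moreover from this have "ginv x = y"
    by (rule ginv_eqI)
  ultimately show "x * ginv x = 1" and "ginv x * x = 1"
    by simp_all
qed

lemma abs_det2_swap: "\<bar>det2 v u\<bar> = \<bar>det2 u v\<bar>"
  unfolding det2_def by (metis abs_minus_commute mult.commute)

lemma det2_neg: "det2 (neg u) v = - det2 u v"
  by (simp add: det2_def neg_def)

lemma is_triang_swap12: "is_triang u v w \<Longrightarrow> is_triang v u w"
  and is_triang_swap23: "is_triang u v w \<Longrightarrow> is_triang u w v"
  unfolding is_triang_def by (simp_all add: abs_det2_swap)

lemma neg_neg [simp]: "neg (neg e) = e"
  by (simp add: neg_def)

lemma is_triang_neg: "is_triang (neg u) v w \<longleftrightarrow> is_triang u v w"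
  unfolding is_triang_def by (simp add: det2_neg)

lemma is_triang_neg_second: "is_triang u (neg v) w \<longleftrightarrow> is_triang u v w"
  by (meson is_triang_neg is_triang_swap12)

lemma coprime_if_det2:
  assumes "\<bar>det2 u v\<bar> = 1"
  shows "coprime (fst u) (snd u)"
proof (rule coprimeI)
  fix k assume "k dvd fst u" and "k dvd snd u"
  then have "k dvd \<bar>det2 u v\<bar>"
    by (simp add: det2_def)
  then show "is_unit k"
    using assms by simp
qed

lemma is_triang_coprime:
  assumes "is_triang u v w"
  shows "coprime (fst u) (snd u)" and "coprime (fst v) (snd v)" and "coprime (fst w) (snd w)"
  using assms unfolding is_triang_def by (auto intro: coprime_if_det2 simp: abs_det2_swap[of w])

lemma is_triang_add_diff:
  assumes "\<bar>det2 u v\<bar> = 1"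
  shows "is_triang u v (v + u)" and "is_triang u v (v - u)"
  using assms unfolding is_triang_def det2_def by (simp_all add: algebra_simps abs_minus_commute)

definition sqnorm :: "slope \<Rightarrow> int" where
  "sqnorm u = (fst u)\<^sup>2 + (snd u)\<^sup>2"

lemma sqnorm_nonneg: "0 \<le> sqnorm u"
  by (simp add: sqnorm_def)

lemma sqnorm_descent:
  assumes det: "\<bar>det2 u v\<bar> = 1" and "sqnorm u \<le> sqnorm v" and "1 < sqnorm v"
  shows "sqnorm (v + u) < sqnorm v \<or> sqnorm (v - u) < sqnorm v"
proof (rule ccontr)
  define d where "d = fst u * fst v + snd u * snd v"
  have lagrange: "sqnorm u * sqnorm v = (det2 u v)\<^sup>2 + d\<^sup>2"
    by (simp add: sqnorm_def det2_def d_def power2_eq_square algebra_simps)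
  have "(det2 u v)\<^sup>2 = 1"
    using det by (metis power2_abs one_power2)
  then have uv: "sqnorm u * sqnorm v = 1 + d\<^sup>2"
    using lagrange by simp
  assume "\<not> ?thesis"
  moreover have "sqnorm (v + u) = sqnorm v + 2 * d + sqnorm u"
    and "sqnorm (v - u) = sqnorm v - 2 * d + sqnorm u"
    by (simp_all add: sqnorm_def d_def power2_eq_square algebra_simps)
  ultimately have "2 * \<bar>d\<bar> \<le> sqnorm u"
    by linarith
  then have "(2 * \<bar>d\<bar>)\<^sup>2 \<le> (sqnorm u)\<^sup>2"
    by (rule power_mono) simp
  then have "4 * d\<^sup>2 \<le> (sqnorm u)\<^sup>2"
    by (simp add: power_mult_distrib)
  also have "\<dots> \<le> sqnorm u * sqnorm v"
    using \<open>sqnorm u \<le> sqnorm v\<close> sqnorm_nonneg[of u] by (simp add: power2_eq_square mult_left_mono)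
  finally have "d\<^sup>2 = 0"
    using uv zero_le_power2[of d] by arith
  then have "sqnorm u * sqnorm v = 1"
    using uv by simp
  then show False
    using \<open>1 < sqnorm v\<close> sqnorm_nonneg[of u] by (simp add: zmult_eq_1_iff)
qed

lemma sqnorm_le_1:
  assumes "sqnorm x \<le> 1"
  shows "x \<in> {(0, 0), (1, 0), (-1, 0), (0, 1), (0, -1)}"
proof -
  have "(fst x)\<^sup>2 \<le> 1" and "(snd x)\<^sup>2 \<le> 1"
    using assms sqnorm_nonneg unfolding sqnorm_def by (smt (verit) zero_le_power2)+
  then have "fst x \<in> {-1, 0, 1}" and "snd x \<in> {-1, 0, 1}"
    by (auto simp: abs_square_le_1)
  with assms show ?thesis
    by (cases x) (auto simp: sqnorm_def)
qed

lemma unit_slopes: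
  assumes "\<bar>det2 u v\<bar> = 1" and "sqnorm u \<le> 1" and "sqnorm v \<le> 1"
  shows "u \<in> {(1, 0), neg (1, 0)} \<and> v \<in> {(0, 1), neg (0, 1)}
    \<or> u \<in> {(0, 1), neg (0, 1)} \<and> v \<in> {(1, 0), neg (1, 0)}"
  using sqnorm_le_1[OF assms(2)] sqnorm_le_1[OF assms(3)] assms(1)
  by (auto simp: det2_def neg_def)

locale triangulation_invariant =
  fixes f :: "slope \<Rightarrow> slope \<Rightarrow> slope \<Rightarrow> 'a"
  assumes third_arc: "is_triang u v w \<Longrightarrow> is_triang u v x \<Longrightarrow> f u v w = f u v x"
    and swap12: "is_triang u v w \<Longrightarrow> f u v w = f v u w"
    and swap23: "is_triang u v w \<Longrightarrow> f u v w = f u w v"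
begin

lemma swap13: "is_triang u v w \<Longrightarrow> f u v w = f w v u"
  by (metis swap12 swap23 is_triang_swap12 is_triang_swap23)

lemma neg_first:
  assumes "is_triang u v w"
  shows "f (neg u) v w = f u v w"
proof -
  have "is_triang w v u" and "is_triang w v (neg u)" and "is_triang (neg u) v w"
    using assms by (metis is_triang_neg is_triang_swap12 is_triang_swap23)+
  then show ?thesis
    by (metis swap13 third_arc)
qed

lemma neg_second:
  assumes "is_triang u v w"
  shows "f u (neg v) w = f u v w"
  using assms neg_first swap12 is_triang_neg_second is_triang_swap12 by metis

lemma eq_if_arcs_eq_up_to_sign:
  assumes "is_triang u v w" and "is_triang u' v' w'"
    and "u \<in> {u', neg u'}" and "v \<in> {v', neg v'}"
  shows "f u v w = f u' v' w'"
proof -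
  have "is_triang u' v w \<and> f u v w = f u' v w"
  proof (cases "u = u'")
    case False
    then have "u = neg u'"
      using assms(3) by simp
    then show ?thesis
      using assms(1) neg_first is_triang_neg by metis
  qed (use assms(1) in simp)
  moreover have "is_triang u' v' w \<and> f u' v w = f u' v' w"
  proof (cases "v = v'")
    case False
    then have "v = neg v'"
      using assms(4) by simp
    then show ?thesis
      using \<open>is_triang u' v w \<and> f u v w = f u' v w\<close> neg_second is_triang_neg_second by metis
  qed (use calculation in simp)
  ultimately show ?thesis
    using assms(2) third_arc by metis
qed

lemma eq_standard_triangulation:
  assumes "is_triang u v w"
  shows "f u v w = f (1, 0) (0, 1) (1, 1)"
  using assms
proof (induction "nat (sqnorm u + sqnorm v)" arbitrary: u v w rule: less_induct)
  case less
  have descend: "f u' v' w' = f (1, 0) (0, 1) (1, 1)"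
    if tri: "is_triang u' v' w'" and sum: "sqnorm u' + sqnorm v' = sqnorm u + sqnorm v"
      and le: "sqnorm u' \<le> sqnorm v'" and gt: "1 < sqnorm v'" for u' v' w'
  proof -
    have det: "\<bar>det2 u' v'\<bar> = 1"
      using tri unfolding is_triang_def by blast
    obtain x where "x \<in> {v' + u', v' - u'}" and "sqnorm x < sqnorm v'"
      using sqnorm_descent[OF det le gt] by blast
    then have "is_triang u' v' x"
      using is_triang_add_diff[OF det] by blast
    then have "f u' v' w' = f u' x v'"
      using tri third_arc swap23 by metis
    also have "\<dots> = f (1, 0) (0, 1) (1, 1)"
      using less.hyps[of u' x] \<open>is_triang u' v' x\<close> \<open>sqnorm x < sqnorm v'\<close> sum
        sqnorm_nonneg[of u'] sqnorm_nonneg[of x] is_triang_swap23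
      by simp
    finally show ?thesis .
  qed
  have standard: "is_triang (1, 0) (0, 1) (1, 1)"
    by (simp add: is_triang_def det2_def)
  consider (units) "sqnorm u \<le> 1" "sqnorm v \<le> 1"
    | (u_shorter) "sqnorm u \<le> sqnorm v" "1 < sqnorm v"
    | (v_shorter) "sqnorm v \<le> sqnorm u" "1 < sqnorm u"
    by linarith
  then show ?case
  proof cases
    case units
    then have "u \<in> {(1, 0), neg (1, 0)} \<and> v \<in> {(0, 1), neg (0, 1)}
      \<or> u \<in> {(0, 1), neg (0, 1)} \<and> v \<in> {(1, 0), neg (1, 0)}"
      using less.prems unit_slopes unfolding is_triang_def by blast
    then show ?thesis
      using eq_if_arcs_eq_up_to_sign[OF _ standard] less.prems swap12 is_triang_swap12 by metis
  next
    case u_shorter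
    then show ?thesis
      using descend less.prems by blast
  next
    case v_shorter
    then show ?thesis
      using descend[of v u w] less.prems swap12 is_triang_swap12 by (simp add: add.commute)
  qed
qed

end

locale decorated_super_teich =
  fixes Ev Od :: "'g::real_algebra_1 set" and body :: "'g \<Rightarrow> real"
    and lam W :: "slope \<Rightarrow> 'g"
  assumes grassmann: "grassmann_alg Ev Od body"
    and point: "super_teich_point Ev Od body lam W"
begin

lemma point_arc:
  "coprime (fst e) (snd e) \<Longrightarrow>
     lam e \<in> Ev \<and> 0 < body (lam e) \<and> lam (neg e) = lam e \<and> W (neg e) = W e"
  using point[unfolded super_teich_point_def, THEN conjunct1] by blast

lemma point_triang_W:
  "is_triang u v w \<Longrightarrow> \<exists>\<theta>\<in>Od. \<exists>\<sigma>\<in>Od. \<forall>e\<in>{u, v, w}. W e = \<theta> * \<sigma> \<or> W e = \<sigma> * \<theta>"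
  using point[unfolded super_teich_point_def, THEN conjunct2, THEN conjunct1] by blast

lemma point_ptolemy:
  "is_triang u v w \<Longrightarrow> is_triang u v w' \<Longrightarrow> w' \<noteq> w \<Longrightarrow> w' \<noteq> neg w \<Longrightarrow>
     lam w * lam w' = (lam u)\<^sup>2 + (lam v)\<^sup>2 + lam u * lam v * W w"
  using point[unfolded super_teich_point_def, THEN conjunct2, THEN conjunct2] by blast

lemma coprime_arc:
  assumes "coprime (fst e) (snd e)"
  shows "central (lam e)" and "central (ginv (lam e))"
    and "lam e * ginv (lam e) = 1" and "ginv (lam e) * lam e = 1"
    and "lam (neg e) = lam e" and "W (neg e) = W e"
proof -
  have "lam e \<in> Ev" and "body (lam e) \<noteq> 0"
    and "lam (neg e) = lam e" and "W (neg e) = W e"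
    using point_arc[OF assms] by auto
  then show "central (lam e)" "central (ginv (lam e))"
    "lam e * ginv (lam e) = 1" "ginv (lam e) * lam e = 1"
    "lam (neg e) = lam e" "W (neg e) = W e"
    using grassmann_alg_even_central[OF grassmann] grassmann_alg_ginv[OF grassmann]
      central_right_inverse by blast+
qed

lemma triang_W_central:
  assumes "is_triang u v w" and "e \<in> {u, v, w}"
  shows "central (W e)"
proof -
  obtain \<theta> \<sigma> where "\<theta> \<in> Od" "\<sigma> \<in> Od" and "W e = \<theta> * \<sigma> \<or> W e = \<sigma> * \<theta>"
    using point_triang_W assms by blast
  then show ?thesis
    using grassmann_alg_odd_mult_odd[OF grassmann] grassmann_alg_even_central[OF grassmann] by metis
qed

lemma semi_perimeter_expand:
  assumes "is_triang u v w"
  shows "semi_perimeter lam W u v w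
    = lam u * (ginv (lam w) * ginv (lam v)) + lam v * (ginv (lam w) * ginv (lam u))
      + lam w * (ginv (lam v) * ginv (lam u))
      + W u * ginv (lam u) + W v * ginv (lam v) + W w * ginv (lam w)"
  using is_triang_coprime[OF assms]
  by (simp add: semi_perimeter_def Let_def ginv_mult coprime_arc)

lemma semi_perimeter_swap12:
  assumes "is_triang u v w"
  shows "semi_perimeter lam W u v w = semi_perimeter lam W v u w"
proof -
  have "lam v * lam u = lam u * lam v"
    using is_triang_coprime(1)[OF assms] coprime_arc(1) central_def by metis
  then show ?thesis
    by (simp add: semi_perimeter_def Let_def add_ac)
qed

lemma semi_perimeter_swap23:
  assumes "is_triang u v w"
  shows "semi_perimeter lam W u v w = semi_perimeter lam W u w v"
proof -
  have "lam w * lam v = lam v * lam w"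
    using is_triang_coprime(2)[OF assms] coprime_arc(1) central_def by metis
  then show ?thesis
    by (simp add: semi_perimeter_def Let_def add_ac)
qed

lemma semi_perimeter_flip:
  assumes "is_triang u v w" and "is_triang u v w'" and "w' \<noteq> w" and "w' \<noteq> neg w"
  shows "semi_perimeter lam W u v w = semi_perimeter lam W u v w'"
proof -
  have "w \<noteq> neg w'"
    using assms(4) by auto
  then have "lam w * lam w' = (lam u)\<^sup>2 + (lam v)\<^sup>2 + lam u * lam v * W w"
    and "lam w' * lam w = (lam u)\<^sup>2 + (lam v)\<^sup>2 + lam u * lam v * W w'"
    using point_ptolemy assms by blast+
  moreover note is_triang_coprime[OF assms(1)] is_triang_coprime(3)[OF assms(2)]
  moreover have "central (W e)" if "e \<in> {u, v, w, w'}" for e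
    using that triang_W_central[OF assms(1)] triang_W_central[OF assms(2)] by blast
  ultimately show ?thesis
    unfolding semi_perimeter_expand[OF assms(1)] semi_perimeter_expand[OF assms(2)]
    by (intro central_semi_perimeter_flip_identity) (simp_all add: coprime_arc)
qed

lemma semi_perimeter_third_arc:
  assumes "is_triang u v w" and "is_triang u v x"
  shows "semi_perimeter lam W u v w = semi_perimeter lam W u v x"
proof (cases "x = w \<or> x = neg w")
  case True
  then show ?thesis
    using is_triang_coprime(3)[OF assms(1)] by (auto simp: semi_perimeter_def Let_def coprime_arc)
next
  case False
  then show ?thesis
    using semi_perimeter_flip[OF assms] by blast
qed

sublocale triangulation_invariant "semi_perimeter lam W"
  by standard (fact semi_perimeter_third_arc semi_perimeter_swap12 semi_perimeter_swap23)+

end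

theorem proposition4p2:
  fixes Ev Od :: "'g::real_algebra_1 set" and body :: "'g \<Rightarrow> real"
    and lam W :: "slope \<Rightarrow> 'g"
  assumes "grassmann_alg Ev Od body"
    and "super_teich_point Ev Od body lam W"
    and "is_triang u v w" and "is_triang u' v' w'"
  shows "semi_perimeter lam W u v w = semi_perimeter lam W u' v' w'"
proof -
  interpret decorated_super_teich Ev Od body lam W
    using assms(1,2) by unfold_locales
  show ?thesis
    using eq_standard_triangulation[OF assms(3)] eq_standard_triangulation[OF assms(4)] by simp
qed

end
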